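(* Let $J$ be a real symmetric $n\times n$ matrix with pairwise distinct eigenvalues, and consider the Euler–Arnold equations $$\dot M = [M,\Omega],\qquad M = \Omega J + J\Omega,$$ with $M,\Omega\in\mathfrak{so}(n)$, $\Omega$ being the unique skew-symmetric matrix with $\Omega J+J\Omega=M$. Then the equilibrium points (relative equilibria) of this system are exactly those $M$ whose $\Omega$ is obtained from the following data: (1) an orthogonal decomposition $\mathbb{R}^n = \left(\bigoplus_{i=1}^{k}\Pi_i\right)\oplus \Pi_0$ in which every $\Pi_i$ ($i=0,\dots,k$) is spanned by principal axes of inertia (eigenvectors of $J$), and every $\Pi_i$ with $i>0$ is nonzero and even-dimensional; (2) for each $i>0$, an angular velocity $\omega_i>0$ and a complex structure $I_i$ on $\Pi_i$ compatible with the Euclidean metric; namely, $\Omega$ acts as $\omega_i I_i$ on $\Pi_i$ for each $i>0$ and as $0$ on $\Pi_0$.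
   Context: $\mathfrak{so}(n)$ denotes the real skew-symmetric $n\times n$ matrices; $[X,Y]=XY-YX$. An equilibrium point means $M$ with $[M,\Omega]=0$. The principal axes of inertia are the eigenvector lines of $J$. A complex structure on a Euclidean space $\Pi$ compatible with the Euclidean metric is an orthogonal linear operator $I\colon\Pi\to\Pi$ with $I^2=-\mathrm{Id}$ (equivalently, a matrix in $\mathfrak{so}(2m)\cap\mathrm{SO}(2m)$ up to orientation conventions, i.e. skew-symmetric and orthogonal). *)

theory Defs
  imports "HOL-Analysis.Analysis"
begin

definition skew_mat :: "real^'n^'n \<Rightarrow> bool" where
  "skew_mat A \<longleftrightarrow> transpose A = - A"

definition sym_mat :: "real^'n^'n \<Rightarrow> bool" where
  "sym_mat A \<longleftrightarrow> transpose A = A"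

definition commutator :: "real^'n^'n \<Rightarrow> real^'n^'n \<Rightarrow> real^'n^'n" where
  "commutator X Y = X ** Y - Y ** X"

definition mat_eigenvalues :: "real^'n^'n \<Rightarrow> real set" where
  "mat_eigenvalues A = {l. \<exists>v. v \<noteq> 0 \<and> A *v v = l *\<^sub>R v}"

definition distinct_eigenvalues :: "real^'n^'n \<Rightarrow> bool" where
  "distinct_eigenvalues A \<longleftrightarrow> card (mat_eigenvalues A) = CARD('n)"

definition principal_axis :: "real^'n^'n \<Rightarrow> real^'n \<Rightarrow> bool" where
  "principal_axis J v \<longleftrightarrow> v \<noteq> 0 \<and> (\<exists>l. J *v v = l *\<^sub>R v)"

definition spanned_by_principal_axes :: "real^'n^'n \<Rightarrow> (real^'n) set \<Rightarrow> bool" where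
  "spanned_by_principal_axes J P \<longleftrightarrow> (\<exists>S. (\<forall>v\<in>S. principal_axis J v) \<and> P = span S)"

definition orth_decomposition :: "nat \<Rightarrow> (nat \<Rightarrow> (real^'n) set) \<Rightarrow> bool" where
  "orth_decomposition k P \<longleftrightarrow>
     (\<forall>i\<le>k. subspace (P i)) \<and>
     (\<forall>i\<le>k. \<forall>j\<le>k. i \<noteq> j \<longrightarrow> (\<forall>x\<in>P i. \<forall>y\<in>P j. inner x y = 0)) \<and>
     span (\<Union>i\<le>k. P i) = UNIV"

definition compatible_complex_structure :: "(real^'n) set \<Rightarrow> (real^'n \<Rightarrow> real^'n) \<Rightarrow> bool" where
  "compatible_complex_structure P I \<longleftrightarrow>
     linear I \<and> (\<forall>x\<in>P. I x \<in> P) \<and>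
     (\<forall>x\<in>P. \<forall>y\<in>P. inner (I x) (I y) = inner x y) \<and>
     (\<forall>x\<in>P. I (I x) = - x)"

end

theory Submission
  imports Defs
begin

text \<open>
  Since \<open>[\<Omega> J + J \<Omega>, \<Omega>] = J \<Omega>\<^sup>2 - \<Omega>\<^sup>2 J\<close>, the point \<open>M\<close> is an equilibrium iff \<open>\<Omega>\<^sup>2\<close>
  commutes with \<open>J\<close>. The matrix \<open>\<Omega>\<^sup>2\<close> is symmetric and negative semidefinite. As \<open>J\<close> has
  simple spectrum, an orthogonal eigenbasis of \<open>J\<close> then also diagonalises \<open>\<Omega>\<^sup>2\<close>, so the
  eigenspaces of \<open>\<Omega>\<^sup>2\<close> are spanned by principal axes. They are preserved by \<open>\<Omega>\<close>,
  which commutes with \<open>\<Omega>\<^sup>2\<close>, and on the eigenspace for \<open>-\<omega>\<^sup>2 < 0\<close> the map \<open>\<Omega>/\<omega>\<close> is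
  orthogonal with square \<open>-1\<close>, i.e. a compatible complex structure, which forces even
  dimension. Conversely, such a decomposition makes \<open>\<Omega>\<^sup>2\<close> a scalar on each summand, and
  the summands are \<open>J\<close>-invariant, so \<open>\<Omega>\<^sup>2\<close> commutes with \<open>J\<close>.
\<close>

definition eigenspace :: "real^'n^'n \<Rightarrow> real \<Rightarrow> (real^'n) set" where
  "eigenspace A c = {x. A *v x = c *\<^sub>R x}"

lemma subspace_eigenspace: "subspace (eigenspace A c)"
  unfolding subspace_def eigenspace_def
  by (simp add: matrix_vector_right_distrib matrix_vector_mult_scaleR scaleR_add_right)

lemma span_subset_eigenspace:
  assumes "\<And>b. b \<in> T \<Longrightarrow> A *v b = c *\<^sub>R b"
  shows "span T \<subseteq> eigenspace A c"
  using assms by (intro span_minimal subspace_eigenspace) (auto simp: eigenspace_def)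

lemma eigenspace_nontrivial:
  assumes "A *v b = c *\<^sub>R b" and "b \<noteq> 0"
  shows "eigenspace A c \<noteq> {0}"
proof
  assume "eigenspace A c = {0}"
  moreover have "b \<in> eigenspace A c"
    using assms(1) by (simp add: eigenspace_def)
  ultimately show False
    using assms(2) by simp
qed

lemma span_eigenvectors_invariant:
  fixes A :: "real^'n^'n"
  assumes "\<And>b. b \<in> T \<Longrightarrow> \<exists>l. A *v b = l *\<^sub>R b" and "x \<in> span T"
  shows "A *v x \<in> span T"
proof -
  have "(*v) A ` T \<subseteq> span T"
    using assms(1) by (metis image_subsetI span_base span_scale)
  then have "(*v) A ` span T \<subseteq> span T"
    by (metis span_linear_image[OF matrix_vector_mul_linear] span_minimal subspace_span)
  then show ?thesis
    using assms(2) by blast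
qed

lemma spanned_by_principal_axes_invariant:
  assumes "spanned_by_principal_axes J P" and "x \<in> P"
  shows "J *v x \<in> P"
  using assms span_eigenvectors_invariant
  unfolding spanned_by_principal_axes_def principal_axis_def by metis

lemma matrix_vector_mult_uminus_right: "A *v (- x) = - (A *v x)"
  for A :: "'a::ring_1^'n^'m"
  by (simp add: matrix_vector_mult_def vec_eq_iff sum_negf)

lemma matrix_vector_mult_uminus_left: "(- A) *v x = - (A *v x)"
  for A :: "'a::ring_1^'n^'m"
  by (simp add: matrix_vector_mult_def vec_eq_iff sum_negf)

lemma matrix_add_rdistrib: "(A + B) ** C = A ** C + B ** C"
  for A B :: "'a::semiring_1^'n^'m"
  by (vector matrix_matrix_mult_def sum.distrib[symmetric] field_simps)

lemma commutator_anticommutator: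
  fixes X Y :: "real^'n^'n"
  shows "commutator (X ** Y + Y ** X) X = Y ** (X ** X) - (X ** X) ** Y"
  by (simp add: commutator_def matrix_add_rdistrib matrix_add_ldistrib matrix_mul_assoc)

lemma inner_matrix_vector_transpose:
  fixes A :: "real^'n^'m"
  shows "inner (A *v x) y = inner x (transpose A *v y)"
  by (metis transpose_matrix_vector dot_lmul_matrix inner_commute)

lemma sym_mat_inner:
  assumes "sym_mat A"
  shows "inner (A *v x) y = inner x (A *v y)"
  using assms by (simp add: sym_mat_def inner_matrix_vector_transpose)

lemma skew_mat_inner:
  assumes "skew_mat A"
  shows "inner (A *v x) y = - inner x (A *v y)"
  using assms
  by (simp add: skew_mat_def inner_matrix_vector_transpose matrix_vector_mult_uminus_left)

lemma sym_mat_skew_square: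
  assumes "skew_mat A"
  shows "sym_mat (A ** A)"
proof -
  have "(- A) ** (- A) = A ** A"
    by (simp add: matrix_matrix_mult_def vec_eq_iff sum_negf)
  then show ?thesis
    using assms by (simp add: sym_mat_def skew_mat_def matrix_transpose_mul)
qed

lemma inner_skew_square:
  assumes "skew_mat A"
  shows "inner ((A ** A) *v x) x = - inner (A *v x) (A *v x)"
  using skew_mat_inner[OF assms] by (simp flip: matrix_vector_mul_assoc)

lemma skew_square_eigenvalue_nonpos:
  assumes "skew_mat A" and "x \<noteq> 0" and "(A ** A) *v x = c *\<^sub>R x"
  shows "c \<le> 0"
proof -
  have "c * inner x x = - inner (A *v x) (A *v x)"
    using inner_skew_square[OF assms(1), of x] assms(3) by simp
  moreover have "inner x x > 0"
    using assms(2) by simp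
  ultimately show ?thesis
    by (smt (verit, best) inner_ge_zero mult_pos_pos)
qed

lemma skew_square_kernel:
  assumes "skew_mat A" and "(A ** A) *v x = 0"
  shows "A *v x = 0"
  using inner_skew_square[OF assms(1), of x] assms(2) by simp

lemma sym_mat_eigenvectors_orthogonal:
  assumes "sym_mat A" "A *v x = l *\<^sub>R x" "A *v y = m *\<^sub>R y" "l \<noteq> m"
  shows "inner x y = 0"
proof -
  have "l * inner x y = m * inner x y"
    using sym_mat_inner[OF assms(1), of x y] assms(2,3) by simp
  then show ?thesis
    using assms(4) by simp
qed

lemma sym_mat_eigenvectors_pairwise_orthogonal:
  assumes "sym_mat A" and eig: "\<And>b. b \<in> B \<Longrightarrow> A *v b = f b *\<^sub>R b" and "inj_on f B"
  shows "pairwise orthogonal B"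
proof (rule pairwiseI)
  fix x y assume "x \<in> B" "y \<in> B" "x \<noteq> y"
  then have "f x \<noteq> f y"
    using \<open>inj_on f B\<close> by (auto dest: inj_onD)
  then show "orthogonal x y"
    unfolding orthogonal_def
    using sym_mat_eigenvectors_orthogonal[OF assms(1) eig eig] \<open>x \<in> B\<close> \<open>y \<in> B\<close> by blast
qed

lemma in_span_if_orthogonal_to_rest:
  fixes B :: "'a::euclidean_space set"
  assumes "pairwise orthogonal B" and "span B = UNIV" and "C \<subseteq> B"
    and "\<And>b. b \<in> B - C \<Longrightarrow> inner x b = 0"
  shows "x \<in> span C"
proof -
  let ?proj = "\<lambda>D. \<Sum>b\<in>D. (b \<bullet> x / (b \<bullet> b)) *\<^sub>R b"
  have "finite B"
    using assms(1) by (rule pairwise_orthogonal_imp_finite)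
  have "orthogonal (x - ?proj B) (x - ?proj B)"
    using Gram_Schmidt_step[OF assms(1), of "x - ?proj B" x] assms(2) by auto
  then have "x = ?proj B"
    by (simp add: orthogonal_self)
  also have "?proj B = ?proj C"
    using assms(4) by (intro sum.mono_neutral_right[OF \<open>finite B\<close> assms(3)])
      (auto simp: inner_commute)
  also have "?proj C \<in> span C"
    by (intro span_sum span_scale span_base)
  finally show ?thesis .
qed

lemma eigenspace_eq_span_eigenbasis:
  assumes "sym_mat A" and "pairwise orthogonal B" and "span B = UNIV"
    and "\<And>b. b \<in> B \<Longrightarrow> A *v b = f b *\<^sub>R b"
  shows "eigenspace A c = span {b \<in> B. f b = c}"
proof
  show "span {b \<in> B. f b = c} \<subseteq> eigenspace A c"
    using assms(4) by (intro span_subset_eigenspace) auto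
  show "eigenspace A c \<subseteq> span {b \<in> B. f b = c}"
  proof
    fix x assume "x \<in> eigenspace A c"
    then have "inner x b = 0" if "b \<in> B - {b \<in> B. f b = c}" for b
      using sym_mat_eigenvectors_orthogonal[OF assms(1) _ assms(4)] that
      by (auto simp: eigenspace_def)
    then show "x \<in> span {b \<in> B. f b = c}"
      using assms(2,3) by (intro in_span_if_orthogonal_to_rest) auto
  qed
qed

lemma sym_mat_simple_eigenbasis:
  fixes J :: "real^'n^'n"
  assumes "sym_mat J" and "distinct_eigenvalues J"
  obtains B eigval where "pairwise orthogonal B" "0 \<notin> B" "span B = UNIV"
    "\<And>b. b \<in> B \<Longrightarrow> J *v b = eigval b *\<^sub>R b" "inj_on eigval B"
proof -
  define E where "E = mat_eigenvalues J"
  have "card E = CARD('n)"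
    using assms(2) by (simp add: E_def distinct_eigenvalues_def)
  then have "finite E"
    using card_ge_0_finite[of E] by simp
  have "\<forall>l\<in>E. \<exists>w. w \<noteq> 0 \<and> J *v w = l *\<^sub>R w"
    unfolding E_def mat_eigenvalues_def by blast
  then obtain v where v: "\<forall>l\<in>E. v l \<noteq> 0 \<and> J *v v l = l *\<^sub>R v l"
    by (rule bchoice[elim_format]) blast
  have "inj_on v E"
  proof (rule inj_onI)
    fix l m assume "l \<in> E" "m \<in> E" "v l = v m"
    then have "l *\<^sub>R v l = m *\<^sub>R v l"
      using v \<open>l \<in> E\<close> \<open>m \<in> E\<close> by metis
    then show "l = m"
      using v \<open>l \<in> E\<close> by simp
  qed
  define B where "B = v ` E"
  define eigval where "eigval = inv_into E v"
  have eig: "J *v b = eigval b *\<^sub>R b" if "b \<in> B" for b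
    using that v \<open>inj_on v E\<close> by (auto simp: B_def eigval_def)
  have "inj_on eigval B"
    by (simp add: B_def eigval_def inj_on_inv_into)
  have orth: "pairwise orthogonal B"
    using assms(1) eig \<open>inj_on eigval B\<close> by (rule sym_mat_eigenvectors_pairwise_orthogonal)
  have "0 \<notin> B"
    using v by (auto simp: B_def)
  have "finite B" "card B = dim (UNIV :: (real^'n) set)"
    using card_image[OF \<open>inj_on v E\<close>] \<open>card E = CARD('n)\<close> \<open>finite E\<close>
    by (simp_all add: B_def)
  then have "span B = UNIV"
    using card_eq_dim[of B UNIV] pairwise_orthogonal_independent[OF orth \<open>0 \<notin> B\<close>] by auto
  show thesis
    using that orth \<open>0 \<notin> B\<close> \<open>span B = UNIV\<close> eig \<open>inj_on eigval B\<close> by blast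
qed

lemma commuting_simple_eigenbasis_eigenvector:
  assumes "sym_mat J" and "pairwise orthogonal B" and "span B = UNIV"
    and "\<And>b. b \<in> B \<Longrightarrow> J *v b = eigval b *\<^sub>R b" and "inj_on eigval B"
    and "J ** S = S ** J" and "b \<in> B"
  shows "\<exists>c. S *v b = c *\<^sub>R b"
proof -
  have "J *v (S *v b) = eigval b *\<^sub>R (S *v b)"
    using assms(4,6,7) by (metis matrix_vector_mul_assoc matrix_vector_mult_scaleR)
  then have "S *v b \<in> eigenspace J (eigval b)"
    by (simp add: eigenspace_def)
  also have "eigenspace J (eigval b) = span {b}"
  proof -
    have "{b' \<in> B. eigval b' = eigval b} = {b}"
      using assms(5,7) by (auto simp: inj_on_def)
    then show ?thesis
      using eigenspace_eq_span_eigenbasis[OF assms(1-4)] by simp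
  qed
  finally show ?thesis
    by (auto simp: span_singleton)
qed

lemma compatible_complex_structure_skew:
  assumes "compatible_complex_structure P I" and "x \<in> P" and "y \<in> P"
  shows "inner (I x) y = - inner x (I y)"
proof -
  have "I x \<in> P" "I (I x) = - x"
    and iso: "\<And>u w. u \<in> P \<Longrightarrow> w \<in> P \<Longrightarrow> inner (I u) (I w) = inner u w"
    using assms unfolding compatible_complex_structure_def by auto
  then have "inner (I x) y = inner (I (I x)) (I y)"
    using \<open>y \<in> P\<close> by metis
  also have "\<dots> = - inner x (I y)"
    using \<open>I (I x) = - x\<close> by simp
  finally show ?thesis .
qed

lemma compatible_complex_structure_orthogonal_complement:
  assumes cs: "compatible_complex_structure P I" and "v \<in> P"
  shows "compatible_complex_structure {y \<in> P. \<forall>x \<in> span {v, I v}. orthogonal x y} I"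
proof -
  have "I v \<in> P" "I (I v) = - v"
    using cs \<open>v \<in> P\<close> by (auto simp: compatible_complex_structure_def)
  have "I y \<in> P \<and> (\<forall>x \<in> span {v, I v}. orthogonal x (I y))"
    if "y \<in> P" and y: "\<forall>x \<in> span {v, I v}. orthogonal x y" for y
  proof
    show "I y \<in> P"
      using cs \<open>y \<in> P\<close> by (simp add: compatible_complex_structure_def)
    have "orthogonal v y" "orthogonal (I v) y"
      using y by (simp_all add: span_base)
    then have "orthogonal (I y) v" "orthogonal (I y) (I v)"
      using compatible_complex_structure_skew[OF cs \<open>v \<in> P\<close> \<open>y \<in> P\<close>]
        compatible_complex_structure_skew[OF cs \<open>I v \<in> P\<close> \<open>y \<in> P\<close>] \<open>I (I v) = - v\<close>
      by (simp_all add: orthogonal_def inner_commute)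
    then have "orthogonal (I y) x" if "x \<in> span {v, I v}" for x
      using that by (rule_tac orthogonal_to_span) auto
    then show "\<forall>x \<in> span {v, I v}. orthogonal x (I y)"
      by (simp add: orthogonal_commute)
  qed
  then show ?thesis
    using cs unfolding compatible_complex_structure_def by blast
qed

lemma compatible_complex_structure_dim_span_pair:
  assumes cs: "compatible_complex_structure P I" and "v \<in> P" and "v \<noteq> 0"
  shows "dim (span {v, I v}) = 2"
proof -
  have "inner (I v) (I v) = inner v v"
    using cs \<open>v \<in> P\<close> by (simp add: compatible_complex_structure_def)
  moreover have "inner v (I v) = 0"
    using compatible_complex_structure_skew[OF cs \<open>v \<in> P\<close> \<open>v \<in> P\<close>]
    by (simp add: inner_commute)
  ultimately have "pairwise orthogonal {v, I v}" "0 \<notin> {v, I v}" "v \<noteq> I v"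
    using \<open>v \<noteq> 0\<close> by (auto simp: pairwise_def orthogonal_def inner_commute)
  then show ?thesis
    using indep_card_eq_dim_span[OF pairwise_orthogonal_independent] by fastforce
qed

lemma compatible_complex_structure_even_dim:
  assumes "subspace P" and "compatible_complex_structure P I"
  shows "even (dim P)"
  using assms
proof (induction "dim P" arbitrary: P rule: less_induct)
  case less
  show ?case
  proof (cases "P = {0}")
    case False
    then obtain v where "v \<in> P" "v \<noteq> 0"
      using less.prems(1) subspace_0 by blast
    define A where "A = span {v, I v}"
    define Q where "Q = {y \<in> P. \<forall>x \<in> A. orthogonal x y}"
    have "I v \<in> P"
      using less.prems(2) \<open>v \<in> P\<close> by (simp add: compatible_complex_structure_def)
    then have "A \<subseteq> P"
      unfolding A_def using less.prems(1) \<open>v \<in> P\<close> by (simp add: span_minimal)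
    then have "dim Q + dim A = dim P"
      unfolding Q_def by (intro dim_subspace_orthogonal_to_vectors less.prems(1)) (simp_all add: A_def)
    moreover have "dim A = 2"
      unfolding A_def
      by (rule compatible_complex_structure_dim_span_pair[OF less.prems(2) \<open>v \<in> P\<close> \<open>v \<noteq> 0\<close>])
    moreover have "subspace Q"
      unfolding Q_def
      using subspace_inter[OF less.prems(1) subspace_orthogonal_to_vectors[of A]]
      by (simp add: Int_def)
    moreover have "compatible_complex_structure Q I"
      unfolding Q_def A_def
      by (rule compatible_complex_structure_orthogonal_complement[OF less.prems(2) \<open>v \<in> P\<close>])
    ultimately have "even (dim Q)" "dim P = dim Q + 2"
      using less.hyps[of Q] by auto
    then show ?thesis
      by simp
  qed simp
qed

lemma eigenspace_skew_square_complex_structure: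
  assumes "skew_mat \<Omega>" and "\<omega> > 0"
  shows "compatible_complex_structure (eigenspace (\<Omega> ** \<Omega>) (- (\<omega> * \<omega>)))
           (\<lambda>x. (1 / \<omega>) *\<^sub>R (\<Omega> *v x))"
  unfolding compatible_complex_structure_def
proof (intro conjI ballI)
  show "linear (\<lambda>x. (1 / \<omega>) *\<^sub>R (\<Omega> *v x))"
    by (intro linear_compose_scale_right matrix_vector_mul_linear)
next
  fix x assume "x \<in> eigenspace (\<Omega> ** \<Omega>) (- (\<omega> * \<omega>))"
  then have x: "\<Omega> *v (\<Omega> *v x) = (- (\<omega> * \<omega>)) *\<^sub>R x"
    by (simp add: eigenspace_def matrix_vector_mul_assoc)
  then show "(1 / \<omega>) *\<^sub>R (\<Omega> *v x) \<in> eigenspace (\<Omega> ** \<Omega>) (- (\<omega> * \<omega>))"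
    by (simp add: eigenspace_def matrix_vector_mult_scaleR matrix_vector_mult_uminus_right
        flip: matrix_vector_mul_assoc)
  show "(1 / \<omega>) *\<^sub>R (\<Omega> *v ((1 / \<omega>) *\<^sub>R (\<Omega> *v x))) = - x"
    using x \<open>\<omega> > 0\<close> by (simp add: matrix_vector_mult_scaleR matrix_vector_mult_uminus_right)
  fix y assume "y \<in> eigenspace (\<Omega> ** \<Omega>) (- (\<omega> * \<omega>))"
  then have "inner (\<Omega> *v x) (\<Omega> *v y) = \<omega> * \<omega> * inner x y"
    using skew_mat_inner[OF assms(1), of x "\<Omega> *v y"]
    by (simp add: eigenspace_def matrix_vector_mul_assoc)
  then show "inner ((1 / \<omega>) *\<^sub>R (\<Omega> *v x)) ((1 / \<omega>) *\<^sub>R (\<Omega> *v y)) = inner x y"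
    using \<open>\<omega> > 0\<close> by simp
qed

lemma skew_square_negative_eigenspace:
  assumes "skew_mat \<Omega>" and "\<omega> > 0"
  defines "P \<equiv> eigenspace (\<Omega> ** \<Omega>) (- (\<omega> * \<omega>))"
    and "I \<equiv> \<lambda>x. (1 / \<omega>) *\<^sub>R (\<Omega> *v x)"
  shows "compatible_complex_structure P I" and "even (dim P)"
    and "\<forall>x\<in>P. \<Omega> *v x = \<omega> *\<^sub>R I x"
proof -
  show cs: "compatible_complex_structure P I"
    unfolding P_def I_def using assms(1,2) by (rule eigenspace_skew_square_complex_structure)
  show "even (dim P)"
    using subspace_eigenspace cs unfolding P_def by (rule compatible_complex_structure_even_dim)
  show "\<forall>x\<in>P. \<Omega> *v x = \<omega> *\<^sub>R I x"
    using \<open>\<omega> > 0\<close> by (simp add: I_def)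
qed

lemma complex_structure_scaled_square:
  assumes "compatible_complex_structure P I" and "\<forall>x \<in> P. \<Omega> *v x = \<omega> *\<^sub>R I x"
    and "x \<in> P"
  shows "(\<Omega> ** \<Omega>) *v x = (- (\<omega> * \<omega>)) *\<^sub>R x"
proof -
  have "I x \<in> P" "I (I x) = - x"
    using assms(1,3) by (auto simp: compatible_complex_structure_def)
  have "(\<Omega> ** \<Omega>) *v x = \<Omega> *v (\<omega> *\<^sub>R I x)"
    using assms(2,3) by (simp flip: matrix_vector_mul_assoc)
  also have "\<dots> = \<omega> *\<^sub>R (\<omega> *\<^sub>R I (I x))"
    using assms(2) \<open>I x \<in> P\<close> by (simp add: matrix_vector_mult_scaleR)
  also have "\<dots> = (- (\<omega> * \<omega>)) *\<^sub>R x"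
    using \<open>I (I x) = - x\<close> by simp
  finally show ?thesis .
qed

lemma finite_set_indexed_from_zero:
  fixes V :: "'a::zero set"
  assumes "finite V"
  obtains k and val :: "nat \<Rightarrow> 'a"
  where "val 0 = 0" "inj_on val {..k}" "val ` {..k} = insert 0 V"
proof -
  define k where "k = card (V - {0})"
  obtain g where g: "bij_betw g {1..k} (V - {0})"
    using ex_bij_betw_nat_finite_1[of "V - {0}"] assms by (auto simp: k_def)
  define val where "val i = (if i = 0 then 0 else g i)" for i :: nat
  have "{..k} = insert 0 {1..k}"
    by auto
  moreover have "val ` {1..k} = V - {0}"
    using g by (simp add: val_def bij_betw_def)
  moreover have "val 0 = 0"
    by (simp add: val_def)
  ultimately have "val ` {..k} = insert 0 V"
    by (metis image_insert insert_Diff_single)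
  have "inj_on val {1..k}"
    using g inj_on_cong[of "{1..k}" val g] by (simp add: bij_betw_def val_def)
  then have "inj_on val {..k}"
    using \<open>{..k} = insert 0 {1..k}\<close> \<open>val ` {1..k} = V - {0}\<close> \<open>val 0 = 0\<close>
    by simp
  then show thesis
    using that \<open>val 0 = 0\<close> \<open>val ` {..k} = insert 0 V\<close> by blast
qed

lemma orth_decomposition_eigenspaces:
  assumes "sym_mat A" and "span B = UNIV" and "\<And>b. b \<in> B \<Longrightarrow> A *v b = f b *\<^sub>R b"
    and "inj_on val {..k}" and "f ` B \<subseteq> val ` {..k}"
  shows "orth_decomposition k (\<lambda>i. eigenspace A (val i))"
  unfolding orth_decomposition_def
proof (intro conjI allI impI ballI)
  fix i j x y assume "i \<le> k" "j \<le> k" "i \<noteq> j"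
    and "x \<in> eigenspace A (val i)" "y \<in> eigenspace A (val j)"
  moreover have "val i \<noteq> val j"
    using \<open>i \<le> k\<close> \<open>j \<le> k\<close> \<open>i \<noteq> j\<close> assms(4) by (auto dest: inj_onD)
  ultimately show "inner x y = 0"
    using sym_mat_eigenvectors_orthogonal[OF assms(1)] by (simp add: eigenspace_def)
next
  have "B \<subseteq> (\<Union>i\<le>k. eigenspace A (val i))"
  proof
    fix b assume "b \<in> B"
    then obtain i where "i \<le> k" "f b = val i"
      using assms(5) by blast
    then show "b \<in> (\<Union>i\<le>k. eigenspace A (val i))"
      using assms(3) \<open>b \<in> B\<close> by (auto simp: eigenspace_def)
  qed
  then show "span (\<Union>i\<le>k. eigenspace A (val i)) = UNIV"
    using assms(2) by (metis span_mono top.extremum_uniqueI)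
qed (rule subspace_eigenspace)

lemma eigenspace_spanned_by_principal_axes:
  assumes "sym_mat A" and "pairwise orthogonal B" and "span B = UNIV"
    and "\<And>b. b \<in> B \<Longrightarrow> A *v b = f b *\<^sub>R b" and "\<And>b. b \<in> B \<Longrightarrow> principal_axis J b"
  shows "spanned_by_principal_axes J (eigenspace A c)"
proof -
  have "eigenspace A c = span {b \<in> B. f b = c}"
    by (rule eigenspace_eq_span_eigenbasis[OF assms(1-4)])
  then show ?thesis
    unfolding spanned_by_principal_axes_def using assms(5)
    by (intro exI[of _ "{b \<in> B. f b = c}"]) simp
qed

lemma skew_square_eigenvalue_indexing:
  fixes \<Omega> :: "real^'n^'n"
  assumes skew: "skew_mat \<Omega>" and "finite B" and "0 \<notin> B"
    and eig: "\<And>b. b \<in> B \<Longrightarrow> (\<Omega> ** \<Omega>) *v b = \<mu> b *\<^sub>R b"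
  obtains k and val :: "nat \<Rightarrow> real"
  where "val 0 = 0" "inj_on val {..k}" "\<mu> ` B \<subseteq> val ` {..k}"
    "\<forall>i\<in>{1..k}. val i < 0" "\<forall>i\<in>{1..k}. \<exists>b\<in>B. \<mu> b = val i"
proof -
  have "finite (\<mu> ` B)"
    using \<open>finite B\<close> by simp
  then obtain k and val :: "nat \<Rightarrow> real" where "val 0 = 0" and inj: "inj_on val {..k}"
    and range: "val ` {..k} = insert 0 (\<mu> ` B)"
    by (elim finite_set_indexed_from_zero)
  have attained: "\<exists>b\<in>B. \<mu> b = val i" and neg: "val i < 0" if "i \<in> {1..k}" for i
  proof -
    have "val i \<noteq> 0"
      using inj_on_contraD[OF inj, of i 0] \<open>val 0 = 0\<close> that by simp
    moreover have "val i \<in> insert 0 (\<mu> ` B)"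
      using range that by auto
    ultimately show "\<exists>b\<in>B. \<mu> b = val i"
      by auto
    then obtain b where "b \<in> B" "\<mu> b = val i" ..
    then show "val i < 0"
      using skew_square_eigenvalue_nonpos[OF skew _ eig] \<open>0 \<notin> B\<close> \<open>val i \<noteq> 0\<close>
      by (metis less_eq_real_def)
  qed
  show thesis
  proof (rule that)
    show "\<mu> ` B \<subseteq> val ` {..k}"
      using range by blast
  qed (use \<open>val 0 = 0\<close> inj attained neg in auto)
qed

definition rotation_decomposition :: "real^'n^'n \<Rightarrow> real^'n^'n \<Rightarrow> bool" where
  "rotation_decomposition J \<Omega> \<longleftrightarrow>
    (\<exists>(k::nat) (P :: nat \<Rightarrow> (real^'n) set) (\<omega> :: nat \<Rightarrow> real) (I :: nat \<Rightarrow> real^'n \<Rightarrow> real^'n).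
        orth_decomposition k P \<and>
        (\<forall>i\<le>k. spanned_by_principal_axes J (P i)) \<and>
        (\<forall>i\<in>{1..k}. P i \<noteq> {0} \<and> even (dim (P i))) \<and>
        (\<forall>i\<in>{1..k}. \<omega> i > 0 \<and> compatible_complex_structure (P i) (I i)) \<and>
        (\<forall>i\<in>{1..k}. \<forall>x\<in>P i. \<Omega> *v x = \<omega> i *\<^sub>R I i x) \<and>
        (\<forall>x\<in>P 0. \<Omega> *v x = 0))"

lemma rotation_decomposition_from_eigenbasis:
  fixes J \<Omega> :: "real^'n^'n"
  assumes skew: "skew_mat \<Omega>" and orth: "pairwise orthogonal B" and "0 \<notin> B"
    and span: "span B = UNIV" and axes: "\<And>b. b \<in> B \<Longrightarrow> principal_axis J b"
    and eig: "\<And>b. b \<in> B \<Longrightarrow> (\<Omega> ** \<Omega>) *v b = \<mu> b *\<^sub>R b"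
  shows "rotation_decomposition J \<Omega>"
proof -
  have sym: "sym_mat (\<Omega> ** \<Omega>)"
    using skew by (rule sym_mat_skew_square)
  obtain k and val :: "nat \<Rightarrow> real" where "val 0 = 0" and inj: "inj_on val {..k}"
    and range: "\<mu> ` B \<subseteq> val ` {..k}" and neg: "\<forall>i\<in>{1..k}. val i < 0"
    and attained: "\<forall>i\<in>{1..k}. \<exists>b\<in>B. \<mu> b = val i"
    using pairwise_orthogonal_imp_finite[OF orth]
    by (elim skew_square_eigenvalue_indexing[OF skew _ \<open>0 \<notin> B\<close> eig])
  define P where "P i = eigenspace (\<Omega> ** \<Omega>) (val i)" for i
  define \<omega> where "\<omega> i = sqrt (- val i)" for i
  define I where "I i = (\<lambda>x. (1 / \<omega> i) *\<^sub>R (\<Omega> *v x))" for i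
  have summand: "\<omega> i > 0 \<and> P i \<noteq> {0} \<and> even (dim (P i)) \<and>
      compatible_complex_structure (P i) (I i) \<and> (\<forall>x\<in>P i. \<Omega> *v x = \<omega> i *\<^sub>R I i x)"
    if i: "i \<in> {1..k}" for i
  proof -
    have "val i < 0"
      using neg i by blast
    then have "\<omega> i > 0" "val i = - (\<omega> i * \<omega> i)"
      by (simp_all add: \<omega>_def)
    moreover obtain b where "b \<in> B" "\<mu> b = val i"
      using attained i by blast
    then have "P i \<noteq> {0}"
      unfolding P_def using eig \<open>0 \<notin> B\<close> by (metis eigenspace_nontrivial)
    ultimately show ?thesis
      using skew_square_negative_eigenspace[OF skew \<open>\<omega> i > 0\<close>] by (simp add: P_def I_def)
  qed
  have "orth_decomposition k P"
    unfolding P_def by (rule orth_decomposition_eigenspaces[OF sym span eig inj range])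
  moreover have "\<forall>i\<le>k. spanned_by_principal_axes J (P i)"
    unfolding P_def using eigenspace_spanned_by_principal_axes[OF sym orth span eig axes] by blast
  moreover have "\<forall>x\<in>P 0. \<Omega> *v x = 0"
    using skew_square_kernel[OF skew] \<open>val 0 = 0\<close> by (simp add: P_def eigenspace_def)
  ultimately show ?thesis
    unfolding rotation_decomposition_def using summand
    by - (intro exI[of _ k] exI[of _ P] exI[of _ \<omega>] exI[of _ I], blast)
qed

lemma rotation_decomposition_if_commute:
  fixes J \<Omega> :: "real^'n^'n"
  assumes "sym_mat J" and "distinct_eigenvalues J" and "skew_mat \<Omega>"
    and "J ** (\<Omega> ** \<Omega>) = (\<Omega> ** \<Omega>) ** J"
  shows "rotation_decomposition J \<Omega>"
proof -
  obtain B eigval where B: "pairwise orthogonal B" "0 \<notin> B" "span B = UNIV"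
    "\<And>b. b \<in> B \<Longrightarrow> J *v b = eigval b *\<^sub>R b" "inj_on eigval B"
    using sym_mat_simple_eigenbasis[OF assms(1,2)] by blast
  have "\<forall>b\<in>B. \<exists>c. (\<Omega> ** \<Omega>) *v b = c *\<^sub>R b"
    using commuting_simple_eigenbasis_eigenvector[OF assms(1) B(1,3-5) assms(4)] by blast
  then obtain \<mu> where "\<forall>b\<in>B. (\<Omega> ** \<Omega>) *v b = \<mu> b *\<^sub>R b"
    by (rule bchoice[elim_format]) blast
  moreover have "principal_axis J b" if "b \<in> B" for b
    using B(2,4) that unfolding principal_axis_def by auto
  ultimately show ?thesis
    using rotation_decomposition_from_eigenbasis[OF assms(3) B(1-3)] by blast
qed

lemma commute_if_scalar_on_invariant_spanning:
  fixes J S :: "real^'n^'n"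
  assumes "span (\<Union>i\<in>K. P i) = UNIV"
    and "\<And>i x. i \<in> K \<Longrightarrow> x \<in> P i \<Longrightarrow> J *v x \<in> P i"
    and "\<And>i. i \<in> K \<Longrightarrow> \<exists>c. \<forall>x\<in>P i. S *v x = c *\<^sub>R x"
  shows "J ** S = S ** J"
proof -
  have "(J ** S - S ** J) *v x = 0 *\<^sub>R x" if "i \<in> K" "x \<in> P i" for i x
  proof -
    obtain c where c: "\<forall>x\<in>P i. S *v x = c *\<^sub>R x"
      using assms(3) \<open>i \<in> K\<close> by blast
    have "(J ** S) *v x = c *\<^sub>R (J *v x)" "(S ** J) *v x = c *\<^sub>R (J *v x)"
      using c assms(2) that by (simp_all add: matrix_vector_mult_scaleR flip: matrix_vector_mul_assoc)
    then show ?thesis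
      by (simp add: matrix_vector_mult_diff_rdistrib)
  qed
  then have "span (\<Union>i\<in>K. P i) \<subseteq> eigenspace (J ** S - S ** J) 0"
    by (intro span_subset_eigenspace) blast
  then have "\<forall>x. (J ** S - S ** J) *v x = 0"
    using assms(1) by (auto simp: eigenspace_def)
  then show ?thesis
    by (simp add: matrix_eq matrix_vector_mult_diff_rdistrib)
qed

lemma commute_if_rotation_decomposition:
  assumes "rotation_decomposition J \<Omega>"
  shows "J ** (\<Omega> ** \<Omega>) = (\<Omega> ** \<Omega>) ** J"
proof -
  obtain k P \<omega> I where "orth_decomposition k P"
    and axes: "\<forall>i\<le>k. spanned_by_principal_axes J (P i)"
    and cs: "\<forall>i\<in>{1..k}. compatible_complex_structure (P i) (I i)"
    and rot: "\<forall>i\<in>{1..k}. \<forall>x\<in>P i. \<Omega> *v x = \<omega> i *\<^sub>R I i x"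
    and ker: "\<forall>x\<in>P 0. \<Omega> *v x = 0"
    using assms unfolding rotation_decomposition_def by blast
  have "\<exists>c. \<forall>x\<in>P i. (\<Omega> ** \<Omega>) *v x = c *\<^sub>R x" if "i \<in> {..k}" for i
  proof (cases "i = 0")
    case True
    then have "\<forall>x\<in>P i. (\<Omega> ** \<Omega>) *v x = 0 *\<^sub>R x"
      using ker by (simp flip: matrix_vector_mul_assoc)
    then show ?thesis ..
  next
    case False
    then have "i \<in> {1..k}"
      using that by simp
    then show ?thesis
      using complex_structure_scaled_square cs rot by blast
  qed
  moreover have "span (\<Union>i\<in>{..k}. P i) = UNIV"
    using \<open>orth_decomposition k P\<close> by (simp add: orth_decomposition_def)
  ultimately show ?thesis
    using axes spanned_by_principal_axes_invariant
    by (intro commute_if_scalar_on_invariant_spanning[where K = "{..k}" and P = P]) blast+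
qed

theorem corollary1:
  fixes J M \<Omega> :: "real^'n^'n"
  assumes "sym_mat J"
    and "distinct_eigenvalues J"
    and "skew_mat \<Omega>"
    and "M = \<Omega> ** J + J ** \<Omega>"
  shows "commutator M \<Omega> = 0 \<longleftrightarrow>
    (\<exists>(k::nat) (P :: nat \<Rightarrow> (real^'n) set) (\<omega> :: nat \<Rightarrow> real) (I :: nat \<Rightarrow> real^'n \<Rightarrow> real^'n).
        orth_decomposition k P \<and>
        (\<forall>i\<le>k. spanned_by_principal_axes J (P i)) \<and>
        (\<forall>i\<in>{1..k}. P i \<noteq> {0} \<and> even (dim (P i))) \<and>
        (\<forall>i\<in>{1..k}. \<omega> i > 0 \<and> compatible_complex_structure (P i) (I i)) \<and>
        (\<forall>i\<in>{1..k}. \<forall>x\<in>P i. \<Omega> *v x = \<omega> i *\<^sub>R I i x) \<and>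
        (\<forall>x\<in>P 0. \<Omega> *v x = 0))"
proof -
  have "commutator M \<Omega> = 0 \<longleftrightarrow> J ** (\<Omega> ** \<Omega>) = (\<Omega> ** \<Omega>) ** J"
    using assms(4) by (simp add: commutator_anticommutator)
  also have "\<dots> \<longleftrightarrow> rotation_decomposition J \<Omega>"
    using rotation_decomposition_if_commute[OF assms(1-3)] commute_if_rotation_decomposition
    by blast
  finally show ?thesis
    unfolding rotation_decomposition_def .
qed

end
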